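(* Let $(P,H,\phi)$ be a host-parasite triple and let $\Psi=\{\psi_1,\dots,\psi_l\}\subseteq\mathcal R(P,H,\phi)$ with $l\ge 1$. Define $\psi_{med}=\psi^{\Psi}_{med}:V(P)\to V(H)$ by letting, for each $v\in V(P)$, $\psi_{med}(v)$ be the element $w\in A(v)$ with $d_H(m(v),w)=zmed(n_1,\dots,n_l)$, where $n_i=d_H(m(v),\psi_i(v))$ for $1\le i\le l$. Then $\psi_{med}\in\mathcal R(P,H,\phi)$.
   Context: A phylogenetic tree $T$ is a finite rooted tree with root $\rho_T$ (indegree $0$, outdegree $2$), in which every vertex other than the root and the leaves has indegree $1$ and outdegree $2$; $V(T)$ is its vertex set, $L(T)$ its leaf set, $V^o(T)=V(T)-L(T)$. $x\succeq_T y$ means $x$ lies on the path from $\rho_T$ to $y$ (i.e. $x$ is an ancestor of $y$ or $x=y$). For $L\subseteq L(T)$ with $|L|\ge 2$, $lca_T(L)$ is the lowest vertex above every element of $L$; if $L=\{x\}$ then $lca_T(L)=x$. $d_T(v,w)$ is the number of edges on the (undirected) path in $T$ between $v$ and $w$. A host-parasite triple $(P,H,\phi)$ consists of two phylogenetic trees $P,H$ and a map $\phi:L(P)\to L(H)$. A reconciliation map is a map $\psi:V(P)\to V(H)$ such that (i) $\psi$ restricted to $L(P)$ equals $\phi$, and (ii) for every $v\in V^o(P)$ and every child $v'$ of $v$, $\psi(v)\succeq_H\psi(v')$; $\mathcal R(P,H,\phi)$ denotes the set of all reconciliation maps. For $v\in V(P)$ let $m(v)=lca_H(\{\phi(x):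 x\in L(P),\ v\succeq_P x\})$ and $A(v)=\{w\in V(H): \rho_H\succeq_H w\succeq_H m(v)\}$ (the vertices on the path from $m(v)$ up to $\rho_H$). Every reconciliation $\psi$ satisfies $\psi(v)\in A(v)$. For a finite multiset $A$ of real numbers, $med(A)$ is its median (the middle element when ordered; for even cardinality, the average of the two middle elements). For a real $r$, $[r]$ is the integer nearest to $r$, and the larger of the two if there are two nearest integers. For a multiset $A=\{n_1,\dots,n_m\}$ of integers, $zmed(n_1,\dots,n_m)=zmed(A)=[med(A)]$. *)

theory Defs
  imports Complex_Main "HOL-Library.Multiset"
begin

text \<open>A rooted tree is given by a vertex set V, a set E of directed edges
 (parent, child) and a root r.\<close>

definition phylo_tree :: "'v set \<Rightarrow> ('v \<times> 'v) set \<Rightarrow> 'v \<Rightarrow> bool" where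
  "phylo_tree V E r \<longleftrightarrow>
     finite V \<and> E \<subseteq> V \<times> V \<and> r \<in> V \<and>
     (\<forall>x\<in>V. (r, x) \<in> E\<^sup>*) \<and>
     {u. (u, r) \<in> E} = {} \<and> card {w. (r, w) \<in> E} = 2 \<and>
     (\<forall>v\<in>V - {r}. card {u. (u, v) \<in> E} = 1 \<and>
        (card {w. (v, w) \<in> E} = 0 \<or> card {w. (v, w) \<in> E} = 2))"

definition leaves :: "'v set \<Rightarrow> ('v \<times> 'v) set \<Rightarrow> 'v set" where
  "leaves V E = {v \<in> V. \<forall>w. (v, w) \<notin> E}"

definition anc :: "('v \<times> 'v) set \<Rightarrow> 'v \<Rightarrow> 'v \<Rightarrow> bool" where
  "anc E x y \<longleftrightarrow> (x, y) \<in> E\<^sup>*"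

definition lca :: "'v set \<Rightarrow> ('v \<times> 'v) set \<Rightarrow> 'v set \<Rightarrow> 'v" where
  "lca V E L = (if \<exists>x. L = {x} then (THE x. L = {x})
     else (THE x. x \<in> V \<and> (\<forall>y\<in>L. anc E x y) \<and>
                  (\<forall>z\<in>V. (\<forall>y\<in>L. anc E z y) \<longrightarrow> anc E z x)))"

definition dist :: "('v \<times> 'v) set \<Rightarrow> 'v \<Rightarrow> 'v \<Rightarrow> nat" where
  "dist E v w = (LEAST n. (v, w) \<in> (E \<union> E\<inverse>) ^^ n)"

definition reconciliations ::
  "'p set \<Rightarrow> ('p \<times> 'p) set \<Rightarrow> 'h set \<Rightarrow> ('h \<times> 'h) set \<Rightarrow> ('p \<Rightarrow> 'h) \<Rightarrow> ('p \<Rightarrow> 'h) set" where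
  "reconciliations VP EP VH EH phi =
     {psi. (\<forall>v\<in>VP. psi v \<in> VH) \<and>
           (\<forall>x\<in>leaves VP EP. psi x = phi x) \<and>
           (\<forall>v\<in>VP - leaves VP EP. \<forall>v'. (v, v') \<in> EP \<longrightarrow> anc EH (psi v) (psi v'))}"

definition mvert ::
  "'p set \<Rightarrow> ('p \<times> 'p) set \<Rightarrow> 'h set \<Rightarrow> ('h \<times> 'h) set \<Rightarrow> ('p \<Rightarrow> 'h) \<Rightarrow> 'p \<Rightarrow> 'h" where
  "mvert VP EP VH EH phi v = lca VH EH (phi ` {x \<in> leaves VP EP. anc EP v x})"

definition Aset ::
  "'p set \<Rightarrow> ('p \<times> 'p) set \<Rightarrow> 'h set \<Rightarrow> ('h \<times> 'h) set \<Rightarrow> 'h \<Rightarrow> ('p \<Rightarrow> 'h) \<Rightarrow> 'p \<Rightarrow> 'h set" where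
  "Aset VP EP VH EH rH phi v =
     {w \<in> VH. anc EH rH w \<and> anc EH w (mvert VP EP VH EH phi v)}"

definition med :: "int multiset \<Rightarrow> real" where
  "med A = (let xs = sorted_list_of_multiset A; k = size A in
     if odd k then real_of_int (xs ! (k div 2))
     else (real_of_int (xs ! (k div 2 - 1)) + real_of_int (xs ! (k div 2))) / 2)"

text \<open>Nearest integer, the larger one in case of a tie.\<close>
definition nearest_int :: "real \<Rightarrow> int" where
  "nearest_int r = \<lfloor>r + 1/2\<rfloor>"

definition zmed :: "int multiset \<Rightarrow> int" where
  "zmed A = nearest_int (med A)"

definition psi_med ::
  "'p set \<Rightarrow> ('p \<times> 'p) set \<Rightarrow> 'h set \<Rightarrow> ('h \<times> 'h) set \<Rightarrow> 'h \<Rightarrow> ('p \<Rightarrow> 'h)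
     \<Rightarrow> nat \<Rightarrow> (nat \<Rightarrow> 'p \<Rightarrow> 'h) \<Rightarrow> 'p \<Rightarrow> 'h" where
  "psi_med VP EP VH EH rH phi l psi v =
     (THE w. w \<in> Aset VP EP VH EH rH phi v \<and>
        int (dist EH (mvert VP EP VH EH phi v) w) =
          zmed (mset (map (\<lambda>i. int (dist EH (mvert VP EP VH EH phi v) (psi i v))) [1..<l+1])))"

end

theory Submission
  imports Defs
begin

text \<open>All candidate images of \<open>v\<close> lie on the root path of \<open>m(v)\<close>, where a vertex is determined by its
  depth, so \<open>\<psi>\<^sub>m\<^sub>e\<^sub>d(v)\<close> is the vertex at depth \<open>depth(m(v)) - zmed(n\<^sub>1, \<dots>, n\<^sub>l)\<close>. For an edge
  \<open>(v, v')\<close> of \<open>P\<close> each \<open>\<psi>\<^sub>i\<close> moves down, so each \<open>n\<^sub>i\<close> grows by at most the depth gained from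
  \<open>m(v)\<close> to \<open>m(v')\<close>. The rounded median is monotone and commutes with shifts, so \<open>\<psi>\<^sub>m\<^sub>e\<^sub>d\<close> moves
  down as well; at leaves all \<open>n\<^sub>i\<close> vanish.\<close>

section \<open>Rooted trees\<close>

locale rooted_tree =
  fixes V :: "'v set" and E :: "('v \<times> 'v) set" and r :: 'v
  assumes finite_vertices: "finite V"
    and root_in_vertices: "r \<in> V"
    and edges_subset: "E \<subseteq> V \<times> V"
    and root_reaches: "x \<in> V \<Longrightarrow> (r, x) \<in> E\<^sup>*"
    and root_no_parent: "(u, r) \<notin> E"
    and parent_unique: "(u, z) \<in> E \<Longrightarrow> (u', z) \<in> E \<Longrightarrow> u = u'"

lemma phylo_tree_rooted_tree:
  assumes "phylo_tree V E r"
  shows "rooted_tree V E r"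
proof
  show "finite V" "r \<in> V" "E \<subseteq> V \<times> V" "\<And>x. x \<in> V \<Longrightarrow> (r, x) \<in> E\<^sup>*" "\<And>u. (u, r) \<notin> E"
    using assms unfolding phylo_tree_def by auto
  fix u u' z assume e: "(u, z) \<in> E" "(u', z) \<in> E"
  then have "z \<in> V - {r}" using assms unfolding phylo_tree_def by auto
  then have "card {u. (u, z) \<in> E} = 1" using assms unfolding phylo_tree_def by auto
  then obtain a where "{u. (u, z) \<in> E} = {a}" by (auto simp: card_1_singleton_iff)
  then show "u = u'" using e by (metis mem_Collect_eq singletonD)
qed

lemma relpow_converse_symcl: "(a, b) \<in> R ^^ n \<Longrightarrow> (b, a) \<in> (R \<union> R\<inverse>) ^^ n"
proof (induction n arbitrary: b)
  case (Suc n)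
  then obtain c where "(a, c) \<in> R ^^ n" "(c, b) \<in> R" by auto
  then have "(c, a) \<in> (R \<union> R\<inverse>) ^^ n" "(b, c) \<in> R \<union> R\<inverse>" using Suc.IH by auto
  then show ?case by (rule relpow_Suc_I2[rotated])
qed simp

context rooted_tree
begin

lemma no_cycle: "(x, x) \<notin> E\<^sup>+"
proof
  assume cyc: "(x, x) \<in> E\<^sup>+"
  then have "x \<in> V" using edges_subset by (auto dest: tranclD)
  then have "(r, x) \<in> E\<^sup>*" by (rule root_reaches)
  then show False using cyc
  proof (induction rule: rtrancl_induct)
    case base
    then show ?case using root_no_parent by (auto dest: tranclD2)
  next
    case (step y z)
    from step.prems obtain u where u: "(z, u) \<in> E\<^sup>*" "(u, z) \<in> E" by (auto dest: tranclD2)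
    then have "u = y" using parent_unique step.hyps(2) by blast
    then have "(y, y) \<in> E\<^sup>+" using u step.hyps(2) by (auto intro: rtrancl_into_trancl2)
    then show ?case using step.IH by blast
  qed
qed

lemma anc_antisym: "(a, b) \<in> E\<^sup>* \<Longrightarrow> (b, a) \<in> E\<^sup>* \<Longrightarrow> a = b"
  using no_cycle by (metis rtrancl_eq_or_trancl rtrancl_trancl_trancl)

lemma anc_linear:
  assumes "(a, y) \<in> E\<^sup>*" "(b, y) \<in> E\<^sup>*"
  shows "(a, b) \<in> E\<^sup>* \<or> (b, a) \<in> E\<^sup>*"
  using assms
proof (induction arbitrary: b rule: rtrancl_induct)
  case (step y z)
  show ?case
  proof (cases "b = z")
    case False
    then have "(b, z) \<in> E\<^sup>+" using step.prems by (auto simp: rtrancl_eq_or_trancl)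
    then obtain y' where "(b, y') \<in> E\<^sup>*" "(y', z) \<in> E" by (auto dest: tranclD2)
    then show ?thesis using step parent_unique by blast
  qed (use step.hyps in auto)
qed simp

lemma anc_in_vertices: "(a, b) \<in> E\<^sup>* \<Longrightarrow> b \<in> V \<Longrightarrow> a \<in> V"
  using edges_subset by (cases "a = b") (auto simp: rtrancl_eq_or_trancl dest: tranclD)

lemma relpow_length_unique: "(a, b) \<in> E ^^ n \<Longrightarrow> (a, b) \<in> E ^^ k \<Longrightarrow> n = k"
proof (induction n arbitrary: k b)
  case 0
  then have "(a, a) \<in> E ^^ k" by simp
  then show ?case using no_cycle trancl_power by (cases k) blast+
next
  case (Suc n)
  from Suc.prems(1) obtain c where c: "(a, c) \<in> E ^^ n" "(c, b) \<in> E" by auto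
  show ?case
  proof (cases k)
    case 0
    then have "(a, a) \<in> E ^^ Suc n" using Suc.prems by simp
    then show ?thesis using no_cycle trancl_power by blast
  next
    case (Suc k')
    then obtain c' where "(a, c') \<in> E ^^ k'" "(c', b) \<in> E" using Suc.prems(2) by auto
    then show ?thesis using Suc.IH c parent_unique \<open>k = Suc k'\<close> by blast
  qed
qed

definition depth :: "'v \<Rightarrow> nat" where
  "depth x = (THE n. (r, x) \<in> E ^^ n)"

lemma depth_eqI: "(r, x) \<in> E ^^ n \<Longrightarrow> depth x = n"
  unfolding depth_def using relpow_length_unique by blast

lemma root_relpow_depth: "x \<in> V \<Longrightarrow> (r, x) \<in> E ^^ depth x"
  using root_reaches depth_eqI by (metis rtrancl_power)

lemma depth_relpow_add: "(a, b) \<in> E ^^ j \<Longrightarrow> a \<in> V \<Longrightarrow> depth b = depth a + j"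
  using root_relpow_depth depth_eqI relpow_add by blast

lemma depth_mono: "(a, b) \<in> E\<^sup>* \<Longrightarrow> b \<in> V \<Longrightarrow> depth a \<le> depth b"
  using depth_relpow_add anc_in_vertices by (metis le_add1 rtrancl_power)

lemma depth_le_symcl_relpow: "(x, y) \<in> (E \<union> E\<inverse>) ^^ n \<Longrightarrow> depth x \<le> depth y + n"
proof (induction n arbitrary: y)
  case (Suc n)
  then obtain z where z: "(x, z) \<in> (E \<union> E\<inverse>) ^^ n" "(z, y) \<in> E \<union> E\<inverse>" by auto
  have "depth z \<le> depth y + 1"
    using z(2) edges_subset depth_relpow_add[of z y 1] depth_relpow_add[of y z 1] by auto
  then show ?case using Suc.IH[OF z(1)] by auto
qed simp

lemma dist_anc:
  assumes "(w, m) \<in> E\<^sup>*" "m \<in> V"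
  shows "dist E m w = depth m - depth w"
proof -
  obtain j where j: "(w, m) \<in> E ^^ j" using assms(1) rtrancl_power by blast
  have dm: "depth m = depth w + j" using depth_relpow_add[OF j anc_in_vertices[OF assms]] .
  have "dist E m w = j"
    unfolding dist_def
  proof (rule Least_equality)
    show "(m, w) \<in> (E \<union> E\<inverse>) ^^ j" using relpow_converse_symcl[OF j] .
    show "j \<le> n" if "(m, w) \<in> (E \<union> E\<inverse>) ^^ n" for n
      using depth_le_symcl_relpow[OF that] dm by linarith
  qed
  then show ?thesis using dm by simp
qed

lemma anc_by_depth:
  assumes "(a, m) \<in> E\<^sup>*" "(b, m) \<in> E\<^sup>*" "m \<in> V" "depth a \<le> depth b"
  shows "(a, b) \<in> E\<^sup>*"
  using anc_linear[OF assms(1,2)]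
proof
  assume "(b, a) \<in> E\<^sup>*"
  then obtain j where j: "(b, a) \<in> E ^^ j" using rtrancl_power by blast
  then have "depth a = depth b + j" using depth_relpow_add anc_in_vertices assms(2,3) by blast
  then show ?thesis using j assms(4) by simp
qed

lemma anc_at_depth:
  assumes "m \<in> V" "k \<le> depth m"
  obtains w where "(w, m) \<in> E\<^sup>*" "depth w = depth m - k"
proof -
  have "(r, m) \<in> E ^^ ((depth m - k) + k)" using root_relpow_depth[OF assms(1)] assms(2) by simp
  then obtain w where "(r, w) \<in> E ^^ (depth m - k)" "(w, m) \<in> E ^^ k"
    unfolding relpow_add by blast
  then show ?thesis using that depth_eqI relpow_imp_rtrancl by blast
qed

lemma lca_spec:
  assumes "L \<subseteq> V" "L \<noteq> {}"
  shows "lca V E L \<in> V" "\<forall>y\<in>L. anc E (lca V E L) y"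
    "\<And>z. z \<in> V \<Longrightarrow> \<forall>y\<in>L. anc E z y \<Longrightarrow> anc E z (lca V E L)"
proof -
  define is_lca where "is_lca x \<longleftrightarrow> x \<in> V \<and> (\<forall>y\<in>L. anc E x y) \<and>
    (\<forall>z\<in>V. (\<forall>y\<in>L. anc E z y) \<longrightarrow> anc E z x)" for x
  have "is_lca (lca V E L)"
  proof (cases "\<exists>x. L = {x}")
    case True
    then obtain x where x: "L = {x}" by blast
    then have "lca V E L = x" unfolding lca_def by simp
    then show ?thesis using x assms(1) unfolding is_lca_def anc_def by simp
  next
    case False
    define C where "C = {x \<in> V. \<forall>y\<in>L. anc E x y}"
    obtain y0 where y0: "y0 \<in> L" using assms(2) by auto
    have fin: "finite C" and "r \<in> C"
      using finite_vertices assms(1) root_in_vertices root_reaches unfolding C_def anc_def by auto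
    then obtain x where x: "x \<in> C" "depth x = Max (depth ` C)"
      using Max_in[of "depth ` C"] by fastforce
    \<comment> \<open>a deepest common ancestor lies below every other one\<close>
    have "is_lca x"
      unfolding is_lca_def
    proof (intro conjI ballI impI)
      fix z assume z: "z \<in> V" "\<forall>y\<in>L. anc E z y"
      then have "depth z \<le> depth x" using x(2) fin unfolding C_def by simp
      moreover have "(z, y0) \<in> E\<^sup>*" "(x, y0) \<in> E\<^sup>*" "y0 \<in> V"
        using z x(1) y0 assms(1) unfolding C_def anc_def by auto
      ultimately show "anc E z x" unfolding anc_def using anc_by_depth by blast
    qed (use x(1) in \<open>auto simp: C_def\<close>)
    moreover have "is_lca x' \<Longrightarrow> x' = x" for x'
      using \<open>is_lca x\<close> anc_antisym unfolding is_lca_def anc_def by blast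
    moreover have "lca V E L = (THE x. is_lca x)"
      using False unfolding lca_def is_lca_def by simp
    ultimately show ?thesis by (metis the_equality)
  qed
  then show "lca V E L \<in> V" "\<forall>y\<in>L. anc E (lca V E L) y"
    "\<And>z. z \<in> V \<Longrightarrow> \<forall>y\<in>L. anc E z y \<Longrightarrow> anc E z (lca V E L)"
    unfolding is_lca_def by auto
qed

lemma leaf_below:
  assumes "v \<in> V"
  obtains x where "x \<in> leaves V E" "(v, x) \<in> E\<^sup>*"
proof -
  have "finite E" using finite_vertices edges_subset finite_subset by blast
  moreover have "acyclic E" unfolding acyclic_def using no_cycle by blast
  ultimately have "wf (E\<inverse>)" by (rule finite_acyclic_wf_converse)
  then have "\<exists>x\<in>leaves V E. (v, x) \<in> E\<^sup>*" using assms
  proof (induction v)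
    case (less v)
    show ?case
    proof (cases "v \<in> leaves V E")
      case False
      then obtain w where w: "(v, w) \<in> E" using less.prems unfolding leaves_def by auto
      then have "w \<in> V" using edges_subset by auto
      then show ?thesis using less.IH w by (meson converse_iff converse_rtrancl_into_rtrancl)
    qed auto
  qed
  then show ?thesis using that by blast
qed

end

section \<open>Monotonicity of the rounded median\<close>

lemma length_filter_sort: "length (filter P (sort xs)) = length (filter P xs)"
  by (metis mset_filter mset_sort size_mset)

lemma sorted_nth_count_ge:
  assumes "sorted xs" "k < length xs"
  shows "Suc k \<le> length (filter (\<lambda>x. x \<le> xs ! k) xs)"
proof -
  have "\<forall>x\<in>set (take (Suc k) xs). x \<le> xs ! k"
    using assms by (auto simp: in_set_conv_nth sorted_nth_mono)
  then have "filter (\<lambda>x. x \<le> xs ! k) (take (Suc k) xs) = take (Suc k) xs" by simp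
  moreover have "length (filter P (take (Suc k) xs)) \<le> length (filter P xs)" for P
    by (metis append_take_drop_id filter_append le_add1 length_append)
  ultimately show ?thesis using assms(2) by (metis Suc_leI length_take min.absorb2)
qed

lemma sorted_nth_count_le:
  assumes "sorted xs" "k < length xs" "t < xs ! k"
  shows "length (filter (\<lambda>x. x \<le> t) xs) \<le> k"
proof -
  have "t < x" if x: "x \<in> set (drop k xs)" for x
  proof -
    obtain j where "j < length (drop k xs)" "x = drop k xs ! j"
      using x unfolding in_set_conv_nth by blast
    then have "xs ! k \<le> x" using assms(1) by (simp add: sorted_nth_mono)
    then show ?thesis using assms(3) by simp
  qed
  then have "filter (\<lambda>x. x \<le> t) (drop k xs) = []" by (force simp: filter_empty_conv)
  then have "length (filter (\<lambda>x. x \<le> t) xs) = length (filter (\<lambda>x. x \<le> t) (take k xs))"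
    by (metis append_Nil2 append_take_drop_id filter_append)
  also have "\<dots> \<le> k" by (metis length_filter_le length_take min.bounded_iff nat_le_linear)
  finally show ?thesis .
qed

lemma length_filter_map_shift_mono:
  assumes "\<forall>i\<in>set I. f i \<le> g i + (c::int)"
  shows "length (filter (\<lambda>x. x \<le> t) (map g I)) \<le> length (filter (\<lambda>x. x \<le> t + c) (map f I))"
  using assms by (induction I) auto

text \<open>At least \<open>k + 1\<close> values of \<open>g\<close> are at most its \<open>k\<close>-th order statistic \<open>t\<close>, so at least \<open>k + 1\<close> values
  of \<open>f\<close> are at most \<open>t + c\<close>.\<close>
lemma sort_nth_shift_mono:
  assumes "\<forall>i\<in>set I. f i \<le> g i + (c::int)" "k < length I"
  shows "sort (map f I) ! k \<le> sort (map g I) ! k + c"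
proof (rule ccontr)
  let ?t = "sort (map g I) ! k"
  assume "\<not> ?thesis"
  then have lt: "?t + c < sort (map f I) ! k" by simp
  have "Suc k \<le> length (filter (\<lambda>x. x \<le> ?t) (sort (map g I)))"
    using sorted_nth_count_ge[of "sort (map g I)" k] assms(2) by simp
  also have "\<dots> \<le> length (filter (\<lambda>x. x \<le> ?t + c) (sort (map f I)))"
    unfolding length_filter_sort by (rule length_filter_map_shift_mono[OF assms(1)])
  also have "\<dots> \<le> k" using sorted_nth_count_le[of "sort (map f I)" k "?t + c"] assms(2) lt by simp
  finally show False by simp
qed

lemma med_shift_mono:
  assumes "\<forall>i\<in>set I. f i \<le> g i + (c::int)" "I \<noteq> []"
  shows "med (mset (map f I)) \<le> med (mset (map g I)) + c"
proof -
  let ?h = "length I div 2"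
  have "real_of_int (sort (map f I) ! k) \<le> real_of_int (sort (map g I) ! k) + real_of_int c"
    if "k \<in> {?h - 1, ?h}" for k
  proof -
    have "sort (map f I) ! k \<le> sort (map g I) ! k + c"
      using sort_nth_shift_mono[OF assms(1)] that assms(2) by (auto simp: less_imp_diff_less)
    then show ?thesis by linarith
  qed
  from this[of "?h - 1"] this[of ?h] show ?thesis
    unfolding med_def Let_def sorted_list_of_multiset_mset by (simp add: field_simps; linarith)
qed

lemma zmed_shift_mono:
  assumes "\<forall>i\<in>set I. f i \<le> g i + (c::int)" "I \<noteq> []"
  shows "zmed (mset (map f I)) \<le> zmed (mset (map g I)) + c"
proof -
  have "\<lfloor>med (mset (map f I)) + 1/2\<rfloor> \<le> \<lfloor>(med (mset (map g I)) + 1/2) + of_int c\<rfloor>"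
    using med_shift_mono[OF assms] by (intro floor_mono) simp
  then show ?thesis unfolding zmed_def nearest_int_def by simp
qed

lemma zmed_const:
  assumes "I \<noteq> []"
  shows "zmed (mset (map (\<lambda>_. c) I)) = c"
proof -
  have "med (mset (map (\<lambda>_. c) I)) = real_of_int c"
    using assms unfolding med_def Let_def sorted_list_of_multiset_mset
    by (simp add: map_replicate_const less_imp_diff_less)
  then show ?thesis unfolding zmed_def nearest_int_def by linarith
qed

lemma zmed_bounds:
  assumes "\<forall>i\<in>set I. lo \<le> f i \<and> f i \<le> (hi::int)" "I \<noteq> []"
  shows "lo \<le> zmed (mset (map f I))" "zmed (mset (map f I)) \<le> hi"
  using zmed_shift_mono[of I "\<lambda>_. lo" f 0] zmed_shift_mono[of I f "\<lambda>_. hi" 0]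
    zmed_const[OF assms(2), of lo] zmed_const[OF assms(2), of hi] assms
  by simp_all

section \<open>Reconciliations\<close>

locale host_parasite =
  P: rooted_tree VP EP rP + H: rooted_tree VH EH rH
  for VP :: "'p set" and EP and rP and VH :: "'h set" and EH and rH +
  fixes phi :: "'p \<Rightarrow> 'h"
  assumes phi_leaves: "phi ` leaves VP EP \<subseteq> leaves VH EH"
begin

abbreviation m :: "'p \<Rightarrow> 'h" where
  "m \<equiv> mvert VP EP VH EH phi"

lemma mvert_spec:
  assumes "v \<in> VP"
  shows "m v \<in> VH"
    and "z \<in> VH \<Longrightarrow> \<forall>x\<in>leaves VP EP. (v, x) \<in> EP\<^sup>* \<longrightarrow> (z, phi x) \<in> EH\<^sup>* \<Longrightarrow> (z, m v) \<in> EH\<^sup>*"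
proof -
  let ?L = "phi ` {x \<in> leaves VP EP. anc EP v x}"
  have "?L \<subseteq> VH" using phi_leaves unfolding leaves_def by auto
  moreover have "?L \<noteq> {}" using P.leaf_below[OF assms] unfolding anc_def by blast
  ultimately show "m v \<in> VH"
    and "z \<in> VH \<Longrightarrow> \<forall>x\<in>leaves VP EP. (v, x) \<in> EP\<^sup>* \<longrightarrow> (z, phi x) \<in> EH\<^sup>* \<Longrightarrow> (z, m v) \<in> EH\<^sup>*"
    using H.lca_spec[of ?L] unfolding mvert_def anc_def by auto
qed

lemma mvert_leaf:
  assumes "x \<in> leaves VP EP"
  shows "m x = phi x"
proof -
  have "{y \<in> leaves VP EP. anc EP x y} = {x}"
    using assms unfolding leaves_def anc_def by (auto elim: converse_rtranclE)
  then show ?thesis unfolding mvert_def lca_def by simp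
qed

lemma mvert_edge:
  assumes "(v, v') \<in> EP"
  shows "(m v, m v') \<in> EH\<^sup>*"
proof -
  have v: "v \<in> VP" and v': "v' \<in> VP" using assms P.edges_subset by auto
  have "(m v, phi x) \<in> EH\<^sup>*" if "x \<in> leaves VP EP" "(v', x) \<in> EP\<^sup>*" for x
  proof -
    have "phi x \<in> phi ` {x \<in> leaves VP EP. anc EP v x}"
      using that assms unfolding anc_def by (auto intro: converse_rtrancl_into_rtrancl)
    moreover have "phi ` {x \<in> leaves VP EP. anc EP v x} \<subseteq> VH"
      using phi_leaves unfolding leaves_def by auto
    ultimately show ?thesis using H.lca_spec(2) unfolding mvert_def anc_def by blast
  qed
  then show ?thesis using mvert_spec[OF v'] mvert_spec(1)[OF v] by blast
qed

lemma reconciliation_anc_leaf: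
  assumes "psi \<in> reconciliations VP EP VH EH phi" "(v, x) \<in> EP\<^sup>*" "x \<in> leaves VP EP"
  shows "(psi v, phi x) \<in> EH\<^sup>*"
  using assms(2,3)
proof (induction rule: converse_rtrancl_induct)
  case base
  then show ?case using assms(1) unfolding reconciliations_def by auto
next
  case (step v y)
  then have "v \<in> VP - leaves VP EP" using P.edges_subset unfolding leaves_def by auto
  then have "anc EH (psi v) (psi y)" using assms(1) step.hyps(1) unfolding reconciliations_def by auto
  then show ?case using step.IH step.prems unfolding anc_def by auto
qed

lemma reconciliation_above_mvert:
  assumes "psi \<in> reconciliations VP EP VH EH phi" "v \<in> VP"
  shows "(psi v, m v) \<in> EH\<^sup>*"
  using assms reconciliation_anc_leaf mvert_spec(2)[OF assms(2)]
  unfolding reconciliations_def by blast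

end

locale median_reconciliation = host_parasite VP EP rP VH EH rH phi
  for VP :: "'p set" and EP rP and VH :: "'h set" and EH rH phi +
  fixes l :: nat and psi :: "nat \<Rightarrow> 'p \<Rightarrow> 'h"
  assumes family_nonempty: "l \<ge> 1"
    and family_reconciliations: "\<forall>i\<in>{1..l}. psi i \<in> reconciliations VP EP VH EH phi"
begin

abbreviation med_dist :: "'p \<Rightarrow> int" where
  "med_dist v \<equiv> zmed (mset (map (\<lambda>i. int (dist EH (m v) (psi i v))) [1..<l+1]))"

abbreviation psi_median :: "'p \<Rightarrow> 'h" where
  "psi_median \<equiv> psi_med VP EP VH EH rH phi l psi"

lemma psi_above_mvert: "i \<in> set [1..<l+1] \<Longrightarrow> v \<in> VP \<Longrightarrow> (psi i v, m v) \<in> EH\<^sup>*"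
  using family_reconciliations reconciliation_above_mvert by auto

lemma med_dist_bounds:
  assumes "v \<in> VP"
  shows "0 \<le> med_dist v" "med_dist v \<le> int (H.depth (m v))"
proof -
  have "\<forall>i\<in>set [1..<l+1]. 0 \<le> int (dist EH (m v) (psi i v)) \<and> int (dist EH (m v) (psi i v)) \<le> int (H.depth (m v))"
    using H.dist_anc[OF psi_above_mvert mvert_spec(1)[OF assms]] assms by auto
  moreover have "[1..<l+1] \<noteq> []" using family_nonempty by simp
  ultimately show "0 \<le> med_dist v" "med_dist v \<le> int (H.depth (m v))"
    by (rule zmed_bounds)+
qed

text \<open>Within \<open>A(v)\<close>, a path from the root to \<open>m(v)\<close>, a vertex is determined by its depth.\<close>
lemma psi_median_spec:
  assumes "v \<in> VP"
  shows "(psi_median v, m v) \<in> EH\<^sup>*" "int (H.depth (psi_median v)) = int (H.depth (m v)) - med_dist v"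
proof -
  have mV: "m v \<in> VH" using mvert_spec(1)[OF assms] .
  have "nat (med_dist v) \<le> H.depth (m v)" using med_dist_bounds[OF assms] by linarith
  then obtain w where w: "(w, m v) \<in> EH\<^sup>*" "H.depth w = H.depth (m v) - nat (med_dist v)"
    using H.anc_at_depth[OF mV] by blast
  have dw: "int (dist EH (m v) w) = med_dist v"
    using H.dist_anc[OF w(1) mV] w(2) med_dist_bounds[OF assms] by simp
  have "psi_median v = w"
    unfolding psi_med_def
  proof (rule the_equality)
    show "w \<in> Aset VP EP VH EH rH phi v \<and> int (dist EH (m v) w) = med_dist v"
      using w(1) dw H.anc_in_vertices[OF w(1) mV] H.root_reaches unfolding Aset_def anc_def by auto
    fix w' assume "w' \<in> Aset VP EP VH EH rH phi v \<and> int (dist EH (m v) w') = med_dist v"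
    then have w': "(w', m v) \<in> EH\<^sup>*" "int (dist EH (m v) w') = med_dist v"
      unfolding Aset_def anc_def by auto
    then have "H.depth w' = H.depth w"
      using dw H.dist_anc[OF w'(1) mV] H.dist_anc[OF w(1) mV] H.depth_mono[OF w'(1) mV]
        H.depth_mono[OF w(1) mV] by linarith
    then show "w' = w" using H.anc_by_depth[OF w'(1) w(1) mV] H.anc_by_depth[OF w(1) w'(1) mV]
      H.anc_antisym by simp
  qed
  then show "(psi_median v, m v) \<in> EH\<^sup>*" "int (H.depth (psi_median v)) = int (H.depth (m v)) - med_dist v"
    using w med_dist_bounds[OF assms] by auto
qed

lemma psi_median_in_vertices: "v \<in> VP \<Longrightarrow> psi_median v \<in> VH"
  using psi_median_spec(1) mvert_spec(1) H.anc_in_vertices by blast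

lemma psi_median_leaf:
  assumes x: "x \<in> leaves VP EP"
  shows "psi_median x = phi x"
proof -
  have xV: "x \<in> VP" and mx: "m x = phi x" using x mvert_leaf unfolding leaves_def by auto
  have dists_zero: "map (\<lambda>i. int (dist EH (m x) (psi i x))) [1..<l+1] = map (\<lambda>_. 0) [1..<l+1]"
    using family_reconciliations x H.dist_anc[of "phi x" "phi x"] mvert_spec(1)[OF xV] mx
    unfolding reconciliations_def by auto
  have "med_dist x = 0"
    unfolding dists_zero by (rule zmed_const) (use family_nonempty in simp)
  then have "H.depth (psi_median x) = H.depth (phi x)" using psi_median_spec(2)[OF xV] mx by simp
  then show ?thesis using psi_median_spec(1)[OF xV] mvert_spec(1)[OF xV] mx
    H.anc_by_depth H.anc_antisym by (metis order_refl rtrancl.rtrancl_refl)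
qed

lemma med_dist_child:
  assumes v: "v \<in> VP - leaves VP EP" and e: "(v, v') \<in> EP"
  shows "med_dist v' \<le> med_dist v + (int (H.depth (m v')) - int (H.depth (m v)))"
proof (rule zmed_shift_mono)
  have vV: "v \<in> VP" and v'V: "v' \<in> VP" using v e P.edges_subset by auto
  show "\<forall>i\<in>set [1..<l+1]. int (dist EH (m v') (psi i v')) \<le>
      int (dist EH (m v) (psi i v)) + (int (H.depth (m v')) - int (H.depth (m v)))"
  proof
    fix i assume i: "i \<in> set [1..<l+1]"
    have "anc EH (psi i v) (psi i v')" "psi i v' \<in> VH"
      using family_reconciliations i v e v'V unfolding reconciliations_def by auto
    then have "H.depth (psi i v) \<le> H.depth (psi i v')"
      using H.depth_mono unfolding anc_def by blast
    then show "int (dist EH (m v') (psi i v')) \<le>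
      int (dist EH (m v) (psi i v)) + (int (H.depth (m v')) - int (H.depth (m v)))"
      using H.dist_anc[OF psi_above_mvert[OF i vV] mvert_spec(1)[OF vV]]
        H.dist_anc[OF psi_above_mvert[OF i v'V] mvert_spec(1)[OF v'V]]
        H.depth_mono[OF psi_above_mvert[OF i vV] mvert_spec(1)[OF vV]]
        H.depth_mono[OF psi_above_mvert[OF i v'V] mvert_spec(1)[OF v'V]] by linarith
  qed
qed (use family_nonempty in simp)

lemma psi_median_edge:
  assumes v: "v \<in> VP - leaves VP EP" and e: "(v, v') \<in> EP"
  shows "anc EH (psi_median v) (psi_median v')"
proof -
  have vV: "v \<in> VP" and v'V: "v' \<in> VP" using v e P.edges_subset by auto
  have "H.depth (psi_median v) \<le> H.depth (psi_median v')"
    using med_dist_child[OF v e] psi_median_spec(2)[OF vV] psi_median_spec(2)[OF v'V] by linarith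
  moreover have "(psi_median v, m v') \<in> EH\<^sup>*"
    using psi_median_spec(1)[OF vV] mvert_edge[OF e] by simp
  ultimately show ?thesis
    using H.anc_by_depth psi_median_spec(1)[OF v'V] mvert_spec(1)[OF v'V] unfolding anc_def by blast
qed

end

theorem mainTheorem2:
  fixes VP :: "'p set" and EP :: "('p \<times> 'p) set" and rP :: 'p
    and VH :: "'h set" and EH :: "('h \<times> 'h) set" and rH :: 'h
    and phi :: "'p \<Rightarrow> 'h" and l :: nat and psi :: "nat \<Rightarrow> 'p \<Rightarrow> 'h"
  assumes "phylo_tree VP EP rP" and "phylo_tree VH EH rH"
    and "phi ` leaves VP EP \<subseteq> leaves VH EH"
    and "l \<ge> 1"
    and "\<forall>i\<in>{1..l}. psi i \<in> reconciliations VP EP VH EH phi"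
    and "\<forall>i\<in>{1..l}. \<forall>j\<in>{1..l}. i \<noteq> j \<longrightarrow> (\<exists>v\<in>VP. psi i v \<noteq> psi j v)"
  shows "psi_med VP EP VH EH rH phi l psi \<in> reconciliations VP EP VH EH phi"
proof -
  interpret median_reconciliation VP EP rP VH EH rH phi l psi
    using assms(1-5)
    by (simp add: phylo_tree_rooted_tree median_reconciliation_def median_reconciliation_axioms_def
        host_parasite_def host_parasite_axioms_def)
  show ?thesis
    unfolding reconciliations_def
    using psi_median_in_vertices psi_median_leaf psi_median_edge by blast
qed

end
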